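(* For every $\alpha \in (0,1)$ and every $A > 0$ there exists $C = C(\alpha, A)$ such that the following holds. Let $m \ge 4$ be an integer and let $b = (b_1,\ldots,b_m) \in \mathbb{R}^m$ satisfy $\|b\|_{1,\infty} \le 1$ and $\|b\|_1 \ge C (\log\log m)^2$. Then there exist a positive integer $l$ with $A \log\log m \le l \le \log m$ and a subset $I_1 \subseteq [m]$ such that the following holds: for every vector $\lambda = (\lambda_i)_{i \in I_1}$ with $\|\lambda\|_1 \le 1$ there exists a subset $I_2 \subseteq I_1$ such that, writing $n_1 := |I_1|$ and $n_2 := |I_2|$, (i) $2^{l/2} \le \frac{m}{n_1} \le \frac{m}{n_2} \le \big(\frac{m}{n_1}\big)^{1+\alpha}$; (ii) $|b_i| \ge \frac{1}{l n_1}$ for all $i \in I_1$, and $|b_i| \ge \frac{1}{l n_2}$ and $|b_i| \ge 2|\lambda_i|$ for all $i \in I_2$.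
   Context: $[m] = \{1,\ldots,m\}$. For a finite sequence $a = (a_i)$, $(|a|^*_i)$ denotes the non-increasing rearrangement of $(|a_i|)$; the weak $\ell_1$ norm $\|a\|_{1,\infty}$ is the infimum of $M > 0$ such that $|a|^*_i \le M i^{-1}$ for all $i$. $\|a\|_1 = \sum_i |a_i|$. All logarithms are to base $2$. *)

theory Defs
  imports Complex_Main
begin

text \<open>Vectors in R^m are functions nat => real, relevant on indices {1..m}.\<close>

definition decr_rearr :: "(nat \<Rightarrow> real) \<Rightarrow> nat \<Rightarrow> nat \<Rightarrow> real" where
  "decr_rearr a m i = rev (sort (map (\<lambda>j. \<bar>a j\<bar>) [1..<m+1])) ! (i - 1)"

definition weak_l1_norm :: "(nat \<Rightarrow> real) \<Rightarrow> nat \<Rightarrow> real" where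
  "weak_l1_norm a m = Inf {M. M > 0 \<and> (\<forall>i\<in>{1..m}. decr_rearr a m i \<le> M / real i)}"

definition l1_norm :: "(nat \<Rightarrow> real) \<Rightarrow> nat set \<Rightarrow> real" where
  "l1_norm a I = (\<Sum>i\<in>I. \<bar>a i\<bar>)"

end

theory Submission
  imports Defs
begin

text \<open>Sort the entries of \<open>b\<close> into dyadic levels, \<open>2\<^sup>-\<^sup>j \<le> \<bar>b\<^sub>i\<bar> < 2\<^sup>1\<^sup>-\<^sup>j\<close>; by the weak
  \<open>\<ell>\<^sub>1\<close> bound a level holds at most \<open>2\<^sup>j\<close> entries, hence mass at most \<open>2\<close>. Index levels by
  \<open>y = log\<^sub>2 m - j\<close>. The levels with \<open>y < c \<approx> A log log m\<close> carry mass \<open>O(c)\<close>, and the others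
  fall into \<open>O(log log m)\<close> windows \<open>[a, (1 + \<alpha>/2) a)\<close>, so since \<open>\<parallel>b\<parallel>\<^sub>1 \<ge> C (log log m)\<^sup>2\<close>
  one window carries mass at least \<open>14\<close>. With \<open>l \<approx> max (A log log m) (\<alpha> a / 8)\<close>, \<open>I\<^sub>1\<close>
  consists of the levels of that window with more than \<open>2\<^sup>j / l\<close> entries. Given \<open>\<lambda>\<close>,
  averaging over these levels yields one on which the entries dominating \<open>2 \<bar>\<lambda>\<^sub>i\<bar>\<close> still
  number at least \<open>2\<^sup>j / l\<close>; they form \<open>I\<^sub>2\<close>. As all levels of \<open>I\<^sub>1\<close> lie in one window
  and \<open>log l \<le> \<alpha> a / 2\<close>, the ratios \<open>m / n\<^sub>1\<close> and \<open>m / n\<^sub>2\<close> differ by at most the exponent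
  \<open>1 + \<alpha>\<close>.\<close>

lemma sorted_nth_from_end_ge:
  fixes ys :: "'a::linorder list"
  assumes srt: "sorted ys" and s1: "1 \<le> s" and cnt: "s \<le> length (filter (\<lambda>x. t \<le> x) ys)"
  shows "t \<le> ys ! (length ys - s)"
proof (rule ccontr)
  assume "\<not> ?thesis"
  hence lt: "ys ! (length ys - s) < t" by simp
  have sl: "s \<le> length ys" using cnt length_filter_le order.trans by blast
  have "{p. p < length ys \<and> t \<le> ys ! p} \<subseteq> {length ys - s <..< length ys}"
  proof
    fix p assume p: "p \<in> {p. p < length ys \<and> t \<le> ys ! p}"
    have "length ys - s < p"
    proof (rule ccontr)
      assume "\<not> length ys - s < p"
      hence "ys ! p \<le> ys ! (length ys - s)"
        using srt sl s1 by (intro sorted_nth_mono) auto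
      with lt p show False by (auto dest: order.trans)
    qed
    with p show "p \<in> {length ys - s <..< length ys}" by simp
  qed
  hence "card {p. p < length ys \<and> t \<le> ys ! p} \<le> s - 1"
    using card_mono[of "{length ys - s <..< length ys}"] sl s1 by simp
  with cnt s1 show False by (simp add: length_filter_conv_card)
qed

lemma length_filter_map_upt:
  "length (filter P (map f [1..<m+1])) = card {i\<in>{1..m}. P (f i)}"
proof -
  have "length (filter P (map f [1..<m+1])) = card (set (filter (P \<circ> f) [1..<m+1]))"
    by (metis distinct_card distinct_filter distinct_upt filter_map length_map)
  also have "set (filter (P \<circ> f) [1..<m+1]) = {i\<in>{1..m}. P (f i)}" by auto
  finally show ?thesis .
qed

lemma decr_rearr_ge:
  assumes s1: "1 \<le> s" and sm: "s \<le> card {i\<in>{1..m}. t \<le> \<bar>b i\<bar>}"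
  shows "t \<le> decr_rearr b m s"
proof -
  define zs where "zs = map (\<lambda>j. \<bar>b j\<bar>) [1..<m+1]"
  have "card {i\<in>{1..m}. t \<le> \<bar>b i\<bar>} \<le> card {1..m}" by (intro card_mono) auto
  hence s_le: "s \<le> length (sort zs)" using sm by (simp add: zs_def)
  have "length (filter (\<lambda>x. t \<le> x) (sort zs)) = length (filter (\<lambda>x. t \<le> x) zs)"
    by (simp add: filter_sort)
  also have "\<dots> = card {i\<in>{1..m}. t \<le> \<bar>b i\<bar>}"
    unfolding zs_def by (rule length_filter_map_upt)
  finally have
  "length (filter (\<lambda>x. t \<le> x) (sort zs)) = card {i\<in>{1..m}. t \<le> \<bar>b i\<bar>}" .
  hence "t \<le> sort zs ! (length (sort zs) - s)"
    using sm s1 by (intro sorted_nth_from_end_ge) auto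
  moreover have "decr_rearr b m s = sort zs ! (length (sort zs) - s)"
    unfolding decr_rearr_def zs_def[symmetric] using s1 s_le
    by (simp add: rev_nth Suc_diff_Suc)
  ultimately show ?thesis by simp
qed

lemma decr_rearr_le_l1_norm:
  assumes "1 \<le> i" "i \<le> m"
  shows "decr_rearr b m i \<le> l1_norm b {1..m}"
proof -
  have "decr_rearr b m i \<in> set (rev (sort (map (\<lambda>j. \<bar>b j\<bar>) [1..<m+1])))"
    unfolding decr_rearr_def using assms by (intro nth_mem) simp
  hence "decr_rearr b m i \<in> (\<lambda>j. \<bar>b j\<bar>) ` {1..m}" by auto
  then obtain j where "j \<in> {1..m}" "decr_rearr b m i = \<bar>b j\<bar>" by auto
  thus ?thesis unfolding l1_norm_def by (auto intro!: member_le_sum)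
qed

lemma weak_l1_card_le:
  assumes w: "weak_l1_norm b m \<le> 1" and Q: "Q \<subseteq> {1..m}" and t: "0 < t"
    and large: "\<And>i. i \<in> Q \<Longrightarrow> t \<le> \<bar>b i\<bar>"
  shows "real (card Q) * t \<le> 1"
proof (rule ccontr)
  define s where "s = card Q"
  define S where "S = {M. M > 0 \<and> (\<forall>i\<in>{1..m}. decr_rearr b m i \<le> M / real i)}"
  assume "\<not> ?thesis"
  hence st: "1 < real s * t" by (simp add: s_def)
  hence s1: "1 \<le> s" by (cases s) auto
  have s_card: "s \<le> card {i\<in>{1..m}. t \<le> \<bar>b i\<bar>}"
    unfolding s_def using Q large by (intro card_mono) auto
  moreover have "card {i\<in>{1..m}. t \<le> \<bar>b i\<bar>} \<le> card {1..m}" by (intro card_mono) auto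
  ultimately have sm: "s \<le> m" by simp
  have "l1_norm b {1..m} * real m + 1 \<in> S"
  proof -
    have Z0: "0 < l1_norm b {1..m} * real m + 1"
      unfolding l1_norm_def by (intro add_nonneg_pos mult_nonneg_nonneg sum_nonneg) auto
    have "decr_rearr b m i \<le> (l1_norm b {1..m} * real m + 1) / real i" if i: "i \<in> {1..m}" for i
    proof -
      have "decr_rearr b m i \<le> l1_norm b {1..m}" using i decr_rearr_le_l1_norm by auto
      also have "\<dots> \<le> (l1_norm b {1..m} * real m + 1) / real m"
        using i by (simp add: field_simps l1_norm_def sum_nonneg)
      also have "\<dots> \<le> (l1_norm b {1..m} * real m + 1) / real i"
        using i Z0 by (intro divide_left_mono) auto
      finally show ?thesis .
    qed
    thus ?thesis using Z0 by (simp add: S_def)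
  qed
  moreover have "Inf S < real s * t" using w st by (simp add: weak_l1_norm_def S_def)
  ultimately obtain M where M: "M \<in> S" "M < real s * t" using cInf_lessD by blast
  have "t \<le> decr_rearr b m s" using decr_rearr_ge[OF s1 s_card] .
  also have "\<dots> \<le> M / real s" using M(1) s1 sm by (simp add: S_def)
  also have "\<dots> < t" using M(2) s1 by (simp add: field_simps)
  finally show False by simp
qed

lemma weak_l1_abs_le_one:
  assumes "weak_l1_norm b m \<le> 1" and "i \<in> {1..m}"
  shows "\<bar>b i\<bar> \<le> 1"
  using weak_l1_card_le[OF assms(1), of "{i}" "\<bar>b i\<bar>"] assms(2) by fastforce

lemma weak_l1_sum_block_le:
  assumes w: "weak_l1_norm b m \<le> 1" and Q: "Q \<subseteq> {1..m}" and t: "0 < t"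
    and block: "\<And>i. i \<in> Q \<Longrightarrow> t \<le> \<bar>b i\<bar> \<and> \<bar>b i\<bar> \<le> 2 * t"
  shows "(\<Sum>i\<in>Q. \<bar>b i\<bar>) \<le> 2"
proof -
  have "(\<Sum>i\<in>Q. \<bar>b i\<bar>) \<le> real (card Q) * (2 * t)"
    by (rule sum_bounded_above) (use block in blast)
  also have "\<dots> = 2 * (real (card Q) * t)" by simp
  also have "\<dots> \<le> 2" using weak_l1_card_le[OF w Q t] block by force
  finally show ?thesis .
qed

definition dyadic_level :: "real \<Rightarrow> nat" where
  "dyadic_level x = nat \<lceil>- log 2 \<bar>x\<bar>\<rceil>"

lemma dyadic_level_bounds:
  assumes pos: "0 < \<bar>x\<bar>" and le1: "\<bar>x\<bar> \<le> 1"
  shows "2 powr - real (dyadic_level x) \<le> \<bar>x\<bar>" and "\<bar>x\<bar> < 2 * 2 powr - real (dyadic_level x)"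
proof -
  define c where "c = - log 2 \<bar>x\<bar>"
  have "0 \<le> c" using pos le1 by (simp add: c_def)
  hence lc: "real (dyadic_level x) = of_int \<lceil>c\<rceil>" by (simp add: dyadic_level_def c_def)
  have x_eq: "\<bar>x\<bar> = 2 powr - c" using pos by (simp add: c_def)
  show "2 powr - real (dyadic_level x) \<le> \<bar>x\<bar>" using lc x_eq by simp
  have "real (dyadic_level x) < c + 1" using lc by linarith
  hence "2 powr - c < 2 powr (1 - real (dyadic_level x))" by simp
  thus "\<bar>x\<bar> < 2 * 2 powr - real (dyadic_level x)"
    by (simp add: x_eq powr_diff powr_minus divide_inverse)
qed

lemma weak_l1_dyadic_level_bounds:
  assumes "weak_l1_norm b m \<le> 1" and "i \<in> {1..m}" and "b i \<noteq> 0"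
  shows "2 powr - real (dyadic_level (b i)) \<le> \<bar>b i\<bar>"
    and "\<bar>b i\<bar> < 2 * 2 powr - real (dyadic_level (b i))"
  using dyadic_level_bounds weak_l1_abs_le_one[OF assms(1,2)] assms(3) by auto

lemma card_nat_set_in_interval_le:
  fixes J :: "nat set" and r s :: real
  assumes fJ: "finite J" and rs: "r \<le> s" and J: "\<And>j. j \<in> J \<Longrightarrow> r < real j \<and> real j \<le> s"
  shows "real (card J) \<le> s - r + 1"
proof (cases "J = {}")
  case True
  thus ?thesis using rs by simp
next
  case False
  have "card J \<le> card {Min J..Max J}" using fJ by (intro card_mono) auto
  hence "real (card J) \<le> real (Max J) + 1 - real (Min J)"
    using Min_le[OF fJ, of "Max J"] Max_in[OF fJ False] by simp
  moreover have "real (Max J) \<le> s" and "r < real (Min J)"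
    using J Max_in[OF fJ False] Min_in[OF fJ False] by blast+
  ultimately show ?thesis by linarith
qed

text \<open>Each of the at most \<open>\<tau> + 1\<close> levels in \<open>(log\<^sub>2 m - \<tau>, log\<^sub>2 m)\<close> carries mass at
  most \<open>2\<close>, and the entries of modulus below \<open>2/m\<close> carry at most \<open>2\<close> together.\<close>

lemma weak_l1_sum_fine_levels_le:
  assumes w: "weak_l1_norm b m \<le> 1" and m: "0 < m" and \<tau>: "0 \<le> \<tau>"
  shows "(\<Sum>i\<in>{i\<in>{1..m}. b i \<noteq> 0 \<and> log 2 (real m) - \<tau> < real (dyadic_level (b i))}. \<bar>b i\<bar>)
    \<le> 2 * \<tau> + 4"
proof -
  define X where "X = log 2 (real m)"
  define lev where "lev i = dyadic_level (b i)" for i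
  define T where "T = {i\<in>{1..m}. b i \<noteq> 0 \<and> X - \<tau> < real (lev i)}"
  define T1 where "T1 = {i\<in>T. X \<le> real (lev i)}"
  define T2 where "T2 = T - T1"
  have fT: "finite T" by (simp add: T_def)
  have T: "T \<subseteq> {1..m}" by (auto simp: T_def)
  have bounds: "2 powr - real (lev i) \<le> \<bar>b i\<bar> \<and> \<bar>b i\<bar> < 2 * 2 powr - real (lev i)"
    if "i \<in> T" for i
    using that weak_l1_dyadic_level_bounds[OF w] by (auto simp: T_def lev_def)
  have "(\<Sum>i\<in>T1. \<bar>b i\<bar>) \<le> real (card T1) * (2 / real m)"
  proof (rule sum_bounded_above)
    fix i assume i: "i \<in> T1"
    hence "\<bar>b i\<bar> < 2 * 2 powr - real (lev i)" using bounds by (simp add: T1_def)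
    also have "\<dots> \<le> 2 * 2 powr - X" using i by (simp add: T1_def)
    also have "\<dots> = 2 / real m" using m by (simp add: X_def powr_minus divide_inverse)
    finally show "\<bar>b i\<bar> \<le> 2 / real m" by simp
  qed
  also have "\<dots> \<le> real m * (2 / real m)"
  proof -
    have "card T1 \<le> card {1..m}" using T by (intro card_mono) (auto simp: T1_def)
    thus ?thesis by (intro mult_right_mono) auto
  qed
  finally have coarse: "(\<Sum>i\<in>T1. \<bar>b i\<bar>) \<le> 2" using m by simp
  have "(\<Sum>i\<in>T2. \<bar>b i\<bar>) = (\<Sum>j\<in>lev ` T2. \<Sum>i\<in>{i\<in>T2. lev i = j}. \<bar>b i\<bar>)"
    by (rule sum.image_gen) (simp add: T2_def fT)
  also have "\<dots> \<le> (\<Sum>j\<in>lev ` T2. 2)"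
  proof (rule sum_mono, rule weak_l1_sum_block_le[OF w])
    fix j i assume "i \<in> {i\<in>T2. lev i = j}"
    hence "i \<in> T" "lev i = j" by (auto simp: T2_def)
    thus "2 powr - real j \<le> \<bar>b i\<bar> \<and> \<bar>b i\<bar> \<le> 2 * 2 powr - real j"
      using bounds[of i] by simp
  qed (use T in \<open>auto simp: T2_def\<close>)
  also have "\<dots> = 2 * real (card (lev ` T2))" by simp
  also have "real (card (lev ` T2)) \<le> X - (X - \<tau>) + 1"
    by (rule card_nat_set_in_interval_le) (use \<tau> fT in \<open>auto simp: T2_def T1_def T_def\<close>)
  finally have fine: "(\<Sum>i\<in>T2. \<bar>b i\<bar>) \<le> 2 * \<tau> + 2" by simp
  have "(\<Sum>i\<in>T. \<bar>b i\<bar>) = (\<Sum>i\<in>T2. \<bar>b i\<bar>) + (\<Sum>i\<in>T1. \<bar>b i\<bar>)"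
    unfolding T2_def by (rule sum.subset_diff) (auto simp: T1_def fT)
  thus ?thesis using coarse fine by (simp add: T_def X_def lev_def)
qed

lemma powr_nat_floor_log_bounds:
  fixes \<beta> x :: real
  assumes \<beta>: "1 < \<beta>" and x: "1 \<le> x"
  shows "\<beta> powr real (nat \<lfloor>log \<beta> x\<rfloor>) \<le> x" and "x < \<beta> * \<beta> powr real (nat \<lfloor>log \<beta> x\<rfloor>)"
    and "real (nat \<lfloor>log \<beta> x\<rfloor>) \<le> log \<beta> x"
proof -
  have "0 \<le> log \<beta> x" using \<beta> x by simp
  hence k: "real (nat \<lfloor>log \<beta> x\<rfloor>) = of_int \<lfloor>log \<beta> x\<rfloor>" by simp
  have x_eq: "x = \<beta> powr log \<beta> x" using \<beta> x by simp
  show "\<beta> powr real (nat \<lfloor>log \<beta> x\<rfloor>) \<le> x" using k \<beta> by (subst x_eq) simp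
  have "\<beta> powr log \<beta> x < \<beta> powr (real (nat \<lfloor>log \<beta> x\<rfloor>) + 1)" using k \<beta> by simp
  thus "x < \<beta> * \<beta> powr real (nat \<lfloor>log \<beta> x\<rfloor>)"
    using \<beta> x_eq by (simp add: powr_add mult.commute)
  show "real (nat \<lfloor>log \<beta> x\<rfloor>) \<le> log \<beta> x" using k by simp
qed

text \<open>Pigeonhole over the geometric scales \<open>[a, \<beta> a)\<close>, \<open>a = c \<beta>\<^sup>k\<close>, that cover \<open>[c, Y]\<close>.\<close>

lemma exists_heavy_geometric_window:
  fixes y f :: "'a \<Rightarrow> real"
  assumes R: "finite R" and \<beta>: "1 < \<beta>" and c: "0 < c" "c \<le> Y" and M: "0 < M"
    and y: "\<And>i. i \<in> R \<Longrightarrow> c \<le> y i \<and> y i \<le> Y" and f: "\<And>i. i \<in> R \<Longrightarrow> 0 \<le> f i"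
    and mass: "M * (log \<beta> (Y / c) + 1) \<le> (\<Sum>i\<in>R. f i)"
  obtains a where "c \<le> a" and "a \<le> Y" and "M \<le> (\<Sum>i\<in>{i\<in>R. a \<le> y i \<and> y i < \<beta> * a}. f i)"
proof -
  define key where "key i = nat \<lfloor>log \<beta> (y i / c)\<rfloor>" for i
  define a where "a k = c * \<beta> powr real k" for k
  have key: "a (key i) \<le> y i \<and> y i < \<beta> * a (key i) \<and> real (key i) \<le> log \<beta> (Y / c)"
    if i: "i \<in> R" for i
  proof -
    have y1: "1 \<le> y i / c" using y[OF i] c by simp
    have "log \<beta> (y i / c) \<le> log \<beta> (Y / c)"
      using \<beta> y1 y[OF i] c by (intro log_mono) (auto simp: divide_right_mono)
    thus ?thesis using powr_nat_floor_log_bounds[OF \<beta> y1] c by (simp add: key_def a_def field_simps)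
  qed
  define K where "K = key ` R"
  have "K \<subseteq> {..nat \<lfloor>log \<beta> (Y / c)\<rfloor>}" using key by (force simp: K_def le_nat_floor)
  hence "card K \<le> nat \<lfloor>log \<beta> (Y / c)\<rfloor> + 1" using card_mono[of "{..nat \<lfloor>log \<beta> (Y / c)\<rfloor>}" K] by simp
  moreover have "0 \<le> log \<beta> (Y / c)" using \<beta> c by simp
  ultimately have card_K: "real (card K) \<le> log \<beta> (Y / c) + 1" by linarith
  have "0 < M * (log \<beta> (Y / c) + 1)" using M \<open>0 \<le> log \<beta> (Y / c)\<close> by simp
  hence "R \<noteq> {}" using mass by auto
  obtain k where k: "k \<in> K" and heavy: "M \<le> (\<Sum>i\<in>{i\<in>R. key i = k}. f i)"
  proof (rule ccontr)
    assume "\<not> thesis"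
    with that have light: "\<forall>k\<in>K. (\<Sum>i\<in>{i\<in>R. key i = k}. f i) < M" by force
    have "(\<Sum>i\<in>R. f i) = (\<Sum>k\<in>K. \<Sum>i\<in>{i\<in>R. key i = k}. f i)"
      unfolding K_def by (rule sum.image_gen[OF R])
    also have "\<dots> < (\<Sum>k\<in>K. M)"
      using light \<open>R \<noteq> {}\<close> R by (intro sum_strict_mono) (auto simp: K_def)
    also have "\<dots> \<le> M * (log \<beta> (Y / c) + 1)" using card_K M by simp
    finally show False using mass by simp
  qed
  show thesis
  proof
    obtain i where i: "i \<in> R" "key i = k" using k by (auto simp: K_def)
    show "c \<le> a k" using c \<beta> ge_one_powr_ge_zero[of \<beta> "real k"] by (simp add: a_def)
    show "a k \<le> Y" using key[OF i(1)] y[OF i(1)] i(2) by simp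
    have "(\<Sum>i\<in>{i\<in>R. key i = k}. f i) \<le> (\<Sum>i\<in>{i\<in>R. a k \<le> y i \<and> y i < \<beta> * a k}. f i)"
      using key f R by (intro sum_mono2) auto
    thus "M \<le> (\<Sum>i\<in>{i\<in>R. a k \<le> y i \<and> y i < \<beta> * a k}. f i)" using heavy by simp
  qed
qed

lemma card_dominating_subset_ge:
  fixes b lam :: "'a \<Rightarrow> real"
  assumes Q: "finite Q" and large: "\<And>i. i \<in> Q \<Longrightarrow> t \<le> \<bar>b i\<bar>"
  shows "real (card Q) * t - 2 * (\<Sum>i\<in>Q. \<bar>lam i\<bar>) \<le> real (card {i\<in>Q. 2 * \<bar>lam i\<bar> \<le> \<bar>b i\<bar>}) * t"
proof -
  define G where "G = {i\<in>Q. 2 * \<bar>lam i\<bar> \<le> \<bar>b i\<bar>}"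
  have GQ: "G \<subseteq> Q" by (auto simp: G_def)
  have "real (card (Q - G)) * t = (\<Sum>i\<in>Q - G. t)" by simp
  also have "\<dots> \<le> (\<Sum>i\<in>Q - G. 2 * \<bar>lam i\<bar>)"
    by (rule sum_mono) (use large in \<open>force simp: G_def\<close>)
  also have "\<dots> \<le> (\<Sum>i\<in>Q. 2 * \<bar>lam i\<bar>)" using Q by (intro sum_mono2) auto
  finally have "real (card (Q - G)) * t \<le> 2 * (\<Sum>i\<in>Q. \<bar>lam i\<bar>)" by (simp add: sum_distrib_left)
  moreover have "real (card (Q - G)) = real (card Q) - real (card G)"
    using Q GQ by (simp add: card_Diff_subset finite_subset card_mono of_nat_diff)
  ultimately show ?thesis by (simp add: G_def left_diff_distrib)
qed

text \<open>Otherwise the excess of every level would be below twice the \<open>\<ell>\<^sub>1\<close>-mass of \<open>\<lambda>\<close> on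
  it, and summing over the levels contradicts \<open>\<parallel>\<lambda>\<parallel>\<^sub>1 \<le> 1\<close>.\<close>

lemma exists_level_dominating_lam:
  fixes lev :: "'a \<Rightarrow> nat" and b lam :: "'a \<Rightarrow> real"
  assumes I: "finite I" and lam: "(\<Sum>i\<in>I. \<bar>lam i\<bar>) \<le> 1"
    and lev: "\<And>i. i \<in> I \<Longrightarrow> 2 powr - real (lev i) \<le> \<bar>b i\<bar>"
    and excess: "2 < (\<Sum>j\<in>lev ` I. real (card {i\<in>I. lev i = j}) * 2 powr - real j - w)"
  obtains j where "j \<in> lev ` I"
    and "w \<le> real (card {i\<in>I. lev i = j \<and> 2 * \<bar>lam i\<bar> \<le> \<bar>b i\<bar>}) * 2 powr - real j"
proof -
  define \<mu> where "\<mu> j = (\<Sum>i\<in>{i\<in>I. lev i = j}. \<bar>lam i\<bar>)" for j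
  have "(\<Sum>j\<in>lev ` I. 2 * \<mu> j) \<le> 2"
    using lam by (simp add: \<mu>_def sum_distrib_left[symmetric] sum.image_gen[OF I, symmetric])
  then obtain j where "j \<in> lev ` I" and j: "2 * \<mu> j < real (card {i\<in>I. lev i = j}) * 2 powr - real j - w"
    using excess sum_mono[of "lev ` I" "\<lambda>j. real (card {i\<in>I. lev i = j}) * 2 powr - real j - w"]
    by (meson not_le order.strict_trans1)
  have "real (card {i\<in>I. lev i = j}) * 2 powr - real j - 2 * \<mu> j
      \<le> real (card {i\<in>{i\<in>I. lev i = j}. 2 * \<bar>lam i\<bar> \<le> \<bar>b i\<bar>}) * 2 powr - real j"
    unfolding \<mu>_def using I lev by (intro card_dominating_subset_ge) auto
  hence "w \<le> real (card {i\<in>I. lev i = j \<and> 2 * \<bar>lam i\<bar> \<le> \<bar>b i\<bar>}) * 2 powr - real j"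
    using j by (simp add: conj_assoc)
  thus thesis using \<open>j \<in> lev ` I\<close> that by blast
qed

definition good_index_set :: "(nat \<Rightarrow> real) \<Rightarrow> nat \<Rightarrow> real \<Rightarrow> nat \<Rightarrow> nat set \<Rightarrow> bool" where
  "good_index_set b m \<alpha> l I1 \<longleftrightarrow> I1 \<subseteq> {1..m} \<and>
    (\<forall>lam::nat \<Rightarrow> real. l1_norm lam I1 \<le> 1 \<longrightarrow>
      (\<exists>I2 \<subseteq> I1.
        2 powr (real l / 2) \<le> real m / real (card I1) \<and>
        real m / real (card I1) \<le> real m / real (card I2) \<and>
        real m / real (card I2) \<le> (real m / real (card I1)) powr (1 + \<alpha>) \<and>
        (\<forall>i\<in>I1. \<bar>b i\<bar> \<ge> 1 / (real l * real (card I1))) \<and>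
        (\<forall>i\<in>I2. \<bar>b i\<bar> \<ge> 1 / (real l * real (card I2)) \<and> \<bar>b i\<bar> \<ge> 2 * \<bar>lam i\<bar>)))"

lemma exists_bottom_level:
  fixes lev :: "nat \<Rightarrow> nat"
  assumes w: "weak_l1_norm b m \<le> 1" and I: "I \<subseteq> {1..m}" "I \<noteq> {}"
    and lev: "\<And>i. i \<in> I \<Longrightarrow> 2 powr - real (lev i) \<le> \<bar>b i\<bar>"
    and heavy_levels: "\<And>j. j \<in> lev ` I \<Longrightarrow> v < real (card {i\<in>I. lev i = j}) * 2 powr - real j"
  obtains jm where "jm \<in> lev ` I" and "\<And>i. i \<in> I \<Longrightarrow> 2 powr - real jm \<le> \<bar>b i\<bar>"
    and "v < real (card I) * 2 powr - real jm" and "real (card I) * 2 powr - real jm \<le> 1"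
proof
  have fI: "finite I" using I(1) finite_subset by blast
  show jm: "Max (lev ` I) \<in> lev ` I" using fI I(2) by simp
  show low: "2 powr - real (Max (lev ` I)) \<le> \<bar>b i\<bar>" if i: "i \<in> I" for i
  proof -
    have "lev i \<le> Max (lev ` I)" using fI i by simp
    hence "2 powr - real (Max (lev ` I)) \<le> 2 powr - real (lev i)" by simp
    also have "\<dots> \<le> \<bar>b i\<bar>" using i lev by auto
    finally show ?thesis .
  qed
  have "v < real (card {i\<in>I. lev i = Max (lev ` I)}) * 2 powr - real (Max (lev ` I))"
    using heavy_levels[OF jm] .
  also have "\<dots> \<le> real (card I) * 2 powr - real (Max (lev ` I))"
    using fI by (intro mult_right_mono) (auto intro!: card_mono)
  finally show "v < real (card I) * 2 powr - real (Max (lev ` I))" .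
  show "real (card I) * 2 powr - real (Max (lev ` I)) \<le> 1"
    using weak_l1_card_le[OF w I(1)] low by simp
qed

text \<open>\<open>I\<^sub>2\<close> lies on a single level \<open>j\<close>, which bounds \<open>m / |I\<^sub>2|\<close> by
  \<open>l m 2^(-j)\<close>; the hypothesis \<open>narrow\<close> compares this with \<open>m 2^(-j\<^sub>0) \<le> m / |I|\<close>.\<close>

lemma exists_second_stage_subset:
  fixes b lam :: "nat \<Rightarrow> real" and lev :: "nat \<Rightarrow> nat" and X \<alpha> :: real
  assumes fI: "finite I" and lev: "\<And>i. i \<in> I \<Longrightarrow> 2 powr - real (lev i) \<le> \<bar>b i\<bar>"
    and l: "0 < l" and m: "real m = 2 powr X" and \<alpha>: "0 \<le> \<alpha>"
    and narrow: "\<And>j j'. j \<in> lev ` I \<Longrightarrow> j' \<in> lev ` I \<Longrightarrow>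
      X - real j + log 2 (real l) \<le> (1 + \<alpha>) * (X - real j')"
    and j0: "j0 \<in> lev ` I" "2 powr (X - real j0) \<le> real m / real (card I)"
    and heavy: "2 < (\<Sum>j\<in>lev ` I. real (card {i\<in>I. lev i = j}) * 2 powr - real j - 1 / real l)"
    and lam: "(\<Sum>i\<in>I. \<bar>lam i\<bar>) \<le> 1"
  obtains I2 where "I2 \<subseteq> I" and "real m / real (card I) \<le> real m / real (card I2)"
    and "real m / real (card I2) \<le> (real m / real (card I)) powr (1 + \<alpha>)"
    and "\<And>i. i \<in> I2 \<Longrightarrow> 1 / (real l * real (card I2)) \<le> \<bar>b i\<bar> \<and> 2 * \<bar>lam i\<bar> \<le> \<bar>b i\<bar>"
proof -
  obtain j where j: "j \<in> lev ` I"
    and G: "1 / real l \<le> real (card {i\<in>I. lev i = j \<and> 2 * \<bar>lam i\<bar> \<le> \<bar>b i\<bar>}) * 2 powr - real j"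
    by (rule exists_level_dominating_lam[OF fI lam _ heavy, where b = b]) (use lev in auto)
  define I2 where "I2 = {i\<in>I. lev i = j \<and> 2 * \<bar>lam i\<bar> \<le> \<bar>b i\<bar>}"
  have sub: "I2 \<subseteq> I" by (auto simp: I2_def)
  have n2_pos: "0 < card I2" using G l by (cases "card I2") (auto simp: I2_def)
  have "card I2 \<le> card I" using fI by (intro card_mono) (auto simp: I2_def)
  hence smaller: "real m / real (card I) \<le> real m / real (card I2)"
    using n2_pos by (intro divide_left_mono) auto
  have large: "1 / (real l * real (card I2)) \<le> \<bar>b i\<bar> \<and> 2 * \<bar>lam i\<bar> \<le> \<bar>b i\<bar>" if "i \<in> I2" for i
  proof -
    have "1 / real l / real (card I2) \<le> real (card I2) * 2 powr - real j / real (card I2)"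
      using G n2_pos by (intro divide_right_mono) (auto simp: I2_def)
    hence "1 / (real l * real (card I2)) \<le> 2 powr - real j" using n2_pos by simp
    also have "\<dots> \<le> \<bar>b i\<bar>" using that lev by (auto simp: I2_def)
    finally show ?thesis using that by (simp add: I2_def)
  qed
  have "real m * 1 \<le> real m * (real l * (real (card I2) * 2 powr - real j))"
    using G l by (intro mult_left_mono) (auto simp: I2_def divide_le_eq mult.commute)
  hence "real m / real (card I2) \<le> real m * real l * 2 powr - real j"
    using n2_pos by (simp add: divide_le_eq mult_ac)
  also have "\<dots> = 2 powr (X - real j + log 2 (real l))"
    using l by (simp add: m powr_add powr_diff powr_minus divide_inverse)
  also have "\<dots> \<le> 2 powr ((1 + \<alpha>) * (X - real j0))" using narrow[OF j j0(1)] by simp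
  also have "\<dots> = (2 powr (X - real j0)) powr (1 + \<alpha>)" by (simp add: powr_powr mult.commute)
  also have "\<dots> \<le> (real m / real (card I)) powr (1 + \<alpha>)" using j0(2) \<alpha> by (intro powr_mono2) auto
  finally show thesis using that sub smaller large by blast
qed

lemma good_index_set_of_heavy_levels:
  fixes b :: "nat \<Rightarrow> real" and lev :: "nat \<Rightarrow> nat" and X \<alpha> :: real
  assumes w: "weak_l1_norm b m \<le> 1" and I: "I \<subseteq> {1..m}"
    and lev: "\<And>i. i \<in> I \<Longrightarrow> 2 powr - real (lev i) \<le> \<bar>b i\<bar>"
    and l: "0 < l" and m: "real m = 2 powr X" and \<alpha>: "0 \<le> \<alpha>"
    and far: "\<And>j. j \<in> lev ` I \<Longrightarrow> real l / 2 \<le> X - real j"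
    and narrow: "\<And>j j'. j \<in> lev ` I \<Longrightarrow> j' \<in> lev ` I \<Longrightarrow>
      X - real j + log 2 (real l) \<le> (1 + \<alpha>) * (X - real j')"
    and heavy_levels: "\<And>j. j \<in> lev ` I \<Longrightarrow> 1 / real l < real (card {i\<in>I. lev i = j}) * 2 powr - real j"
    and heavy: "2 < (\<Sum>j\<in>lev ` I. real (card {i\<in>I. lev i = j}) * 2 powr - real j - 1 / real l)"
  shows "good_index_set b m \<alpha> l I"
proof -
  have fI: "finite I" using I finite_subset by blast
  have "I \<noteq> {}" using heavy by auto
  then obtain j0 where j0: "j0 \<in> lev ` I" and low: "\<And>i. i \<in> I \<Longrightarrow> 2 powr - real j0 \<le> \<bar>b i\<bar>"
    and n1_low: "1 / real l < real (card I) * 2 powr - real j0"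
    and n1_up: "real (card I) * 2 powr - real j0 \<le> 1"
    using exists_bottom_level[OF w I _ lev heavy_levels] by blast
  have n1_pos: "0 < card I" using fI \<open>I \<noteq> {}\<close> by (simp add: card_gt_0_iff)
  have P: "2 powr (X - real j0) \<le> real m / real (card I)"
  proof -
    have "real m * (real (card I) * 2 powr - real j0) \<le> real m * 1"
      using n1_up by (intro mult_left_mono) auto
    moreover have "2 powr (X - real j0) = real m * 2 powr - real j0"
      by (simp add: m powr_diff powr_minus divide_inverse)
    ultimately show ?thesis using n1_pos by (simp add: field_simps)
  qed
  have I_far: "2 powr (real l / 2) \<le> real m / real (card I)"
    using far[OF j0] P by (smt (verit) powr_mono one_le_numeral)
  have I_large: "1 / (real l * real (card I)) \<le> \<bar>b i\<bar>" if "i \<in> I" for i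
  proof -
    have "1 / real l / real (card I) < real (card I) * 2 powr - real j0 / real (card I)"
      using n1_low n1_pos by (intro divide_strict_right_mono) auto
    thus ?thesis using low[OF that] n1_pos by simp
  qed
  show ?thesis
  proof (unfold good_index_set_def, intro conjI allI impI)
    show "I \<subseteq> {1..m}" by (rule I)
    fix lam :: "nat \<Rightarrow> real"
    assume "l1_norm lam I \<le> 1"
    hence "(\<Sum>i\<in>I. \<bar>lam i\<bar>) \<le> 1" by (simp add: l1_norm_def)
    then obtain I2 where "I2 \<subseteq> I" "real m / real (card I) \<le> real m / real (card I2)"
      "real m / real (card I2) \<le> (real m / real (card I)) powr (1 + \<alpha>)"
      "\<And>i. i \<in> I2 \<Longrightarrow> 1 / (real l * real (card I2)) \<le> \<bar>b i\<bar> \<and> 2 * \<bar>lam i\<bar> \<le> \<bar>b i\<bar>"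
      using exists_second_stage_subset[OF fI lev l m \<alpha> narrow j0 P heavy] by blast
    thus "\<exists>I2\<subseteq>I.
        2 powr (real l / 2) \<le> real m / real (card I) \<and>
        real m / real (card I) \<le> real m / real (card I2) \<and>
        real m / real (card I2) \<le> (real m / real (card I)) powr (1 + \<alpha>) \<and>
        (\<forall>i\<in>I. 1 / (real l * real (card I)) \<le> \<bar>b i\<bar>) \<and>
        (\<forall>i\<in>I2. 1 / (real l * real (card I2)) \<le> \<bar>b i\<bar> \<and> 2 * \<bar>lam i\<bar> \<le> \<bar>b i\<bar>)"
      using I_far I_large by blast
  qed
qed

text \<open>\<open>I\<^sub>1\<close> keeps the levels of \<open>U\<close> whose weight exceeds \<open>1/l\<close>; discarding the others
  only increases the total excess.\<close>

lemma good_index_set_of_levels: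
  fixes b :: "nat \<Rightarrow> real" and lev :: "nat \<Rightarrow> nat" and X \<alpha> :: real
  assumes w: "weak_l1_norm b m \<le> 1" and U: "U \<subseteq> {1..m}"
    and lev: "\<And>i. i \<in> U \<Longrightarrow> 2 powr - real (lev i) \<le> \<bar>b i\<bar>"
    and l: "0 < l" and m: "real m = 2 powr X" and \<alpha>: "0 \<le> \<alpha>"
    and far: "\<And>j. j \<in> lev ` U \<Longrightarrow> real l / 2 \<le> X - real j"
    and narrow: "\<And>j j'. j \<in> lev ` U \<Longrightarrow> j' \<in> lev ` U \<Longrightarrow>
      X - real j + log 2 (real l) \<le> (1 + \<alpha>) * (X - real j')"
    and mass: "2 + real (card (lev ` U)) / real l < (\<Sum>i\<in>U. 2 powr - real (lev i))"
  shows "\<exists>I1. good_index_set b m \<alpha> l I1"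
proof
  define excess where "excess j = real (card {i\<in>U. lev i = j}) * 2 powr - real j - 1 / real l" for j
  define I1 where "I1 = {i\<in>U. 0 < excess (lev i)}"
  have fU: "finite U" using U finite_subset by blast
  have I1U: "I1 \<subseteq> U" by (auto simp: I1_def)
  have fibers: "{i\<in>I1. lev i = j} = {i\<in>U. lev i = j}" if "j \<in> lev ` I1" for j
    using that by (auto simp: I1_def)
  have level_sum: "(\<Sum>i\<in>{i\<in>U. lev i = j}. 2 powr - real (lev i))
      = real (card {i\<in>U. lev i = j}) * 2 powr - real j" for j
    by (subst sum.cong[OF refl, of _ _ "\<lambda>_. 2 powr - real j"]) auto
  have "(\<Sum>i\<in>U. 2 powr - real (lev i)) - real (card (lev ` U)) / real l = (\<Sum>j\<in>lev ` U. excess j)"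
    by (simp add: sum.image_gen[OF fU, of "\<lambda>i. 2 powr - real (lev i)" lev] level_sum
        excess_def sum_subtractf)
  also have "\<dots> \<le> (\<Sum>j\<in>lev ` I1. excess j)"
  proof -
    have sub: "lev ` I1 \<subseteq> lev ` U" using I1U by auto
    have "(\<Sum>j\<in>lev ` U - lev ` I1. excess j) \<le> 0" by (rule sum_nonpos) (auto simp: I1_def)
    thus ?thesis using sum.subset_diff[OF sub finite_imageI[OF fU], of excess] by simp
  qed
  finally have "2 < (\<Sum>j\<in>lev ` I1. excess j)" using mass by simp
  hence "2 < (\<Sum>j\<in>lev ` I1. real (card {i\<in>I1. lev i = j}) * 2 powr - real j - 1 / real l)"
    by (simp add: fibers excess_def cong: sum.cong)
  thus "good_index_set b m \<alpha> l I1"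
    using I1U U lev far narrow l m \<alpha> fibers
    by (intro good_index_set_of_heavy_levels[OF w]) (auto simp: I1_def excess_def)
qed

lemma log2_le_linear:
  fixes a \<alpha> :: real
  assumes \<alpha>: "0 < \<alpha>" and a: "64 / \<alpha>^2 \<le> a"
  shows "log 2 a \<le> \<alpha> / 2 * a"
proof -
  have a0: "0 < a" using a \<alpha> by (smt (verit) divide_pos_pos zero_less_power)
  have "8 / \<alpha> \<le> sqrt a"
    using real_sqrt_le_mono[OF a] \<alpha> by (simp add: real_sqrt_divide real_sqrt_abs2)
  hence "8 \<le> \<alpha> * sqrt a" using \<alpha> by (simp add: field_simps)
  hence "8 * sqrt a \<le> \<alpha> * sqrt a * sqrt a" using a0 by (intro mult_right_mono) auto
  hence sqrt_a: "4 * sqrt a \<le> \<alpha> / 2 * a" using a0 by (simp add: mult.assoc)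
  have "ln (1 / 2 :: real) \<le> 1 / 2 - 1" by (rule ln_le_minus_one) simp
  hence ln2: "1 / 2 \<le> ln (2 :: real)" by (simp add: ln_div)
  have "ln (sqrt a) \<le> sqrt a - 1" using a0 by (intro ln_le_minus_one) simp
  hence "ln a \<le> 2 * sqrt a" using a0 by (simp add: ln_sqrt)
  hence "log 2 a \<le> 4 * sqrt a"
  proof (cases "0 \<le> ln a")
    case True
    hence "ln a / ln 2 \<le> ln a / (1 / 2)" using ln2 by (intro divide_left_mono) auto
    thus ?thesis using \<open>ln a \<le> 2 * sqrt a\<close> by (simp add: log_def)
  next
    case False
    hence "log 2 a \<le> 0" by (simp add: log_def divide_nonpos_pos)
    thus ?thesis using a0 by (smt (verit) real_sqrt_ge_zero)
  qed
  thus ?thesis using sqrt_a by linarith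
qed

lemma exists_nat_between_scales:
  fixes \<alpha> a L :: real
  assumes \<alpha>: "0 < \<alpha>" "\<alpha> < 1" and a: "L + 1 \<le> a" "16 / \<alpha> \<le> a"
  obtains l :: nat where "0 < l" and "L \<le> real l" and "\<alpha> * a / 8 \<le> real l" and "real l \<le> a"
proof
  define l where "l = nat \<lceil>max L (\<alpha> * a / 8)\<rceil>"
  have \<alpha>a: "16 \<le> \<alpha> * a" using a(2) \<alpha> by (simp add: field_simps)
  hence l_eq: "real l = of_int \<lceil>max L (\<alpha> * a / 8)\<rceil>" by (simp add: l_def)
  show "L \<le> real l" and l_ge: "\<alpha> * a / 8 \<le> real l" using l_eq by linarith+
  thus "0 < l" using \<alpha>a by simp
  have "0 \<le> a" using a(2) \<alpha> divide_pos_pos[of 16 \<alpha>] by linarith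
  hence "\<alpha> * a \<le> 1 * a" using \<alpha> by (intro mult_right_mono) auto
  hence "\<alpha> * a / 8 + 1 \<le> a" using \<alpha>a by simp
  moreover have "real l < max L (\<alpha> * a / 8) + 1" using l_eq by linarith
  ultimately show "real l \<le> a" using a(1) by linarith
qed

lemma good_index_set_of_heavy_window:
  fixes b :: "nat \<Rightarrow> real" and m :: nat and \<alpha> a L :: real
  defines "X \<equiv> log 2 (real m)"
  assumes w: "weak_l1_norm b m \<le> 1" and m: "0 < m" and \<alpha>: "0 < \<alpha>" "\<alpha> < 1"
    and a: "L + 1 \<le> a" "64 / \<alpha>^2 \<le> a" "16 / \<alpha> \<le> a" "a \<le> X"
    and U: "U \<subseteq> {i\<in>{1..m}. b i \<noteq> 0}"
    and window: "\<And>i. i \<in> U \<Longrightarrow>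
      a \<le> X - real (dyadic_level (b i)) \<and> X - real (dyadic_level (b i)) < (1 + \<alpha> / 2) * a"
    and heavy: "14 \<le> (\<Sum>i\<in>U. \<bar>b i\<bar>)"
  shows "\<exists>l. 0 < l \<and> L \<le> real l \<and> real l \<le> X \<and> (\<exists>I1. good_index_set b m \<alpha> l I1)"
proof -
  define lev where "lev i = dyadic_level (b i)" for i
  have lev: "2 powr - real (lev i) \<le> \<bar>b i\<bar> \<and> \<bar>b i\<bar> < 2 * 2 powr - real (lev i)"
    if "i \<in> U" for i
    using weak_l1_dyadic_level_bounds[OF w] that U by (auto simp: lev_def)
  have window_lev: "a \<le> X - real j \<and> X - real j < (1 + \<alpha> / 2) * a" if "j \<in> lev ` U" for j
    using that window by (auto simp: lev_def)
  have \<alpha>a: "16 \<le> \<alpha> * a" using a(3) \<alpha> by (simp add: field_simps)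
  have a_pos: "0 < a" using a(3) \<alpha> divide_pos_pos[of 16 \<alpha>] by linarith
  obtain l where l_pos: "0 < l" and l_ge: "L \<le> real l" "\<alpha> * a / 8 \<le> real l"
    and l_le: "real l \<le> a"
    using exists_nat_between_scales[OF \<alpha> a(1,3)] by blast
  have log_l: "log 2 (real l) \<le> \<alpha> / 2 * a"
  proof -
    have "log 2 (real l) \<le> log 2 a" using l_pos l_le by (intro log_mono) auto
    also have "\<dots> \<le> \<alpha> / 2 * a" using log2_le_linear[OF \<alpha>(1) a(2)] .
    finally show ?thesis .
  qed
  have "real (card (lev ` U)) \<le> (X - a) - (X - (1 + \<alpha> / 2) * a) + 1"
  proof (rule card_nat_set_in_interval_le)
    show "finite (lev ` U)" using finite_subset[OF U] by simp
  qed (use window_lev \<alpha> a_pos in \<open>auto simp: algebra_simps\<close>)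
  also have "\<dots> \<le> 9 / 2 * (\<alpha> * a / 8)" using \<alpha>a by (simp add: algebra_simps)
  also have "\<dots> \<le> 9 / 2 * real l" using l_ge(2) by simp
  finally have "real (card (lev ` U)) / real l \<le> 9 / 2" using l_pos by (simp add: divide_le_eq)
  moreover have "(\<Sum>i\<in>U. \<bar>b i\<bar>) / 2 \<le> (\<Sum>i\<in>U. 2 powr - real (lev i))"
    unfolding sum_divide_distrib using lev by (intro sum_mono) (simp add: less_imp_le mult.commute)
  ultimately have mass: "2 + real (card (lev ` U)) / real l < (\<Sum>i\<in>U. 2 powr - real (lev i))"
    using heavy by linarith
  have "\<exists>I1. good_index_set b m \<alpha> l I1"
  proof (rule good_index_set_of_levels[OF w _ _ l_pos _ _ _ _ mass])
    show "U \<subseteq> {1..m}" using U by auto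
    show "2 powr - real (lev i) \<le> \<bar>b i\<bar>" if "i \<in> U" for i using lev[OF that] by simp
    show "real m = 2 powr X" using m by (simp add: X_def)
    show "0 \<le> \<alpha>" using \<alpha> by simp
    show "real l / 2 \<le> X - real j" if "j \<in> lev ` U" for j using window_lev[OF that] l_le l_pos by simp
    show "X - real j + log 2 (real l) \<le> (1 + \<alpha>) * (X - real j')"
      if "j \<in> lev ` U" and "j' \<in> lev ` U" for j j'
    proof -
      have "(1 + \<alpha>) * a \<le> (1 + \<alpha>) * (X - real j')" using window_lev[OF that(2)] \<alpha> by simp
      thus ?thesis using window_lev[OF that(1)] log_l by (simp add: algebra_simps)
    qed
  qed
  thus ?thesis using l_pos l_ge(1) l_le a(4) by auto
qed

lemma good_index_set_exists:
  fixes b :: "nat \<Rightarrow> real" and m :: nat and \<alpha> c L :: real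
  defines "X \<equiv> log 2 (real m)"
  assumes w: "weak_l1_norm b m \<le> 1" and m: "2 \<le> m" and \<alpha>: "0 < \<alpha>" "\<alpha> < 1"
    and c: "L + 1 \<le> c" "64 / \<alpha>^2 \<le> c" "16 / \<alpha> \<le> c"
    and mass: "2 * c + 4 + 14 * (log (1 + \<alpha> / 2) X + 1) < l1_norm b {1..m}"
  shows "\<exists>l. 0 < l \<and> L \<le> real l \<and> real l \<le> X \<and> (\<exists>I1. good_index_set b m \<alpha> l I1)"
proof -
  define \<beta> where "\<beta> = 1 + \<alpha> / 2"
  define y where "y i = X - real (dyadic_level (b i))" for i
  define E where "E = {i\<in>{1..m}. b i \<noteq> 0}"
  define R where "R = {i\<in>E. c \<le> y i}"
  have "16 < 16 / \<alpha>" using \<alpha> by (simp add: field_simps)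
  hence c1: "1 \<le> c" using c(3) by linarith
  have \<beta>: "1 < \<beta>" using \<alpha> by (simp add: \<beta>_def)
  have X1: "1 \<le> X" using m by (simp add: X_def)
  have fE: "finite E" by (simp add: E_def)
  have "l1_norm b {1..m} = (\<Sum>i\<in>E. \<bar>b i\<bar>)"
    unfolding l1_norm_def E_def by (rule sum.mono_neutral_right) auto
  also have "\<dots> = (\<Sum>i\<in>E - R. \<bar>b i\<bar>) + (\<Sum>i\<in>R. \<bar>b i\<bar>)"
    by (rule sum.subset_diff) (auto simp: R_def fE)
  also have "(\<Sum>i\<in>E - R. \<bar>b i\<bar>) \<le> 2 * c + 4"
  proof -
    have "E - R = {i\<in>{1..m}. b i \<noteq> 0 \<and> X - c < real (dyadic_level (b i))}"
      by (auto simp: E_def R_def y_def)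
    thus ?thesis using weak_l1_sum_fine_levels_le[OF w, of c] m c1 by (simp add: X_def)
  qed
  finally have mass_R: "14 * (log \<beta> X + 1) < (\<Sum>i\<in>R. \<bar>b i\<bar>)" using mass by (simp add: \<beta>_def)
  have "0 \<le> log \<beta> X" using \<beta> X1 by simp
  hence "R \<noteq> {}" using mass_R by auto
  then obtain i0 where "i0 \<in> R" by blast
  hence cX: "c \<le> X" by (simp add: R_def y_def)
  have "log \<beta> (X / c) \<le> log \<beta> X" using \<beta> c1 X1 by (intro log_mono) (auto simp: field_simps)
  obtain a where a: "c \<le> a" "a \<le> X"
    and heavy: "14 \<le> (\<Sum>i\<in>{i\<in>R. a \<le> y i \<and> y i < \<beta> * a}. \<bar>b i\<bar>)"
  proof (rule exists_heavy_geometric_window[of R \<beta> c X 14 y "\<lambda>i. \<bar>b i\<bar>"])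
    show "14 * (log \<beta> (X / c) + 1) \<le> (\<Sum>i\<in>R. \<bar>b i\<bar>)"
      using mass_R \<open>log \<beta> (X / c) \<le> log \<beta> X\<close> by (simp add: algebra_simps)
  qed (use fE \<beta> c1 cX in \<open>auto simp: R_def E_def y_def\<close>)
  show ?thesis
    unfolding X_def
  proof (rule good_index_set_of_heavy_window[OF w _ \<alpha> _ _ _ _ _ _ heavy])
    show "{i\<in>R. a \<le> y i \<and> y i < \<beta> * a} \<subseteq> {i\<in>{1..m}. b i \<noteq> 0}" by (auto simp: R_def E_def)
  qed (use m c a in \<open>auto simp: X_def y_def \<beta>_def\<close>)
qed

lemma affine_lt_quadratic:
  fixes A c q x :: real
  assumes "0 \<le> A" "0 \<le> c" "0 \<le> q" "1 \<le> x"
  shows "2 * (A * x + 1 + c) + 4 + 14 * (q * x + 1) < (2 * (A + 1 + c) + 4 + 14 * (q + 1) + 1) * x^2"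
proof -
  have "c * 1 \<le> c * x" using assms by (intro mult_left_mono) auto
  moreover have "0 \<le> q * x" using assms by simp
  ultimately have "2 * (A * x + 1 + c) + 4 + 14 * (q * x + 1) < (2 * (A + 1 + c) + 4 + 14 * (q + 1) + 1) * x"
    using assms by (simp add: algebra_simps)
  also have "\<dots> \<le> (2 * (A + 1 + c) + 4 + 14 * (q + 1) + 1) * x^2"
    using assms by (intro mult_left_mono) (auto simp: power2_eq_square)
  finally show ?thesis .
qed

theorem proposition3p1:
  fixes \<alpha> A :: real
  assumes "0 < \<alpha>" and "\<alpha> < 1" and "0 < A"
  shows "\<exists>C::real. \<forall>(m::nat) (b::nat \<Rightarrow> real).
    m \<ge> 4 \<and> weak_l1_norm b m \<le> 1 \<and> l1_norm b {1..m} \<ge> C * (log 2 (log 2 (real m)))^2 \<longrightarrow>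
    (\<exists>l::nat. 0 < l \<and> A * log 2 (log 2 (real m)) \<le> real l \<and> real l \<le> log 2 (real m) \<and>
      (\<exists>I1 \<subseteq> {1..m}. \<forall>lam::nat \<Rightarrow> real. l1_norm lam I1 \<le> 1 \<longrightarrow>
        (\<exists>I2 \<subseteq> I1.
          2 powr (real l / 2) \<le> real m / real (card I1) \<and>
          real m / real (card I1) \<le> real m / real (card I2) \<and>
          real m / real (card I2) \<le> (real m / real (card I1)) powr (1 + \<alpha>) \<and>
          (\<forall>i\<in>I1. \<bar>b i\<bar> \<ge> 1 / (real l * real (card I1))) \<and>
          (\<forall>i\<in>I2. \<bar>b i\<bar> \<ge> 1 / (real l * real (card I2)) \<and> \<bar>b i\<bar> \<ge> 2 * \<bar>lam i\<bar>))))"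
proof -
  define c0 where "c0 = 64 / \<alpha>^2 + 16 / \<alpha>"
  define q where "q = ln 2 / ln (1 + \<alpha> / 2)"
  define C where "C = 2 * (A + 1 + c0) + 4 + 14 * (q + 1) + 1"
  have "0 < c0" using assms by (simp add: c0_def add_pos_pos)
  have "0 \<le> q" using assms by (simp add: q_def)
  have "\<exists>l. 0 < l \<and> A * log 2 (log 2 (real m)) \<le> real l \<and> real l \<le> log 2 (real m) \<and>
      (\<exists>I1. good_index_set b m \<alpha> l I1)"
    if m: "4 \<le> m" and w: "weak_l1_norm b m \<le> 1"
      and mass: "C * (log 2 (log 2 (real m)))^2 \<le> l1_norm b {1..m}" for m b
  proof -
    define LX where "LX = log 2 (log 2 (real m))"
    have LX: "1 \<le> LX" using m by (simp add: LX_def le_log_iff)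
    have "log (1 + \<alpha> / 2) (log 2 (real m)) = q * LX" by (simp add: q_def LX_def log_def)
    moreover have "2 * (A * LX + 1 + c0) + 4 + 14 * (q * LX + 1) < C * LX^2"
      unfolding C_def using affine_lt_quadratic[OF _ _ \<open>0 \<le> q\<close> LX, of A c0] assms \<open>0 < c0\<close> by simp
    ultimately have "2 * (A * LX + 1 + c0) + 4 + 14 * (log (1 + \<alpha> / 2) (log 2 (real m)) + 1)
        < l1_norm b {1..m}" using mass by (simp add: LX_def)
    thus ?thesis
      using good_index_set_exists[OF w _ assms(1,2), of "A * LX" "A * LX + 1 + c0"] m LX assms
      by (simp add: LX_def c0_def)
  qed
  thus ?thesis by (intro exI[of _ C]) (auto simp: good_index_set_def)
qed

end
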